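(* Consider the CGNS below with observed variable split as $\mathbf{x}=(\mathbf{x}_{\mathrm A},\mathbf{x}_{\mathrm B})\in\mathbb{R}^{k_{\mathrm A}+k_{\mathrm B}}$, and suppose that for every $t$ and $\mathbf{x}$: $\boldsymbol{\Lambda}^{\mathbf{x}_{\mathrm A}}=\mathbf{0}_{k_{\mathrm A}\times l}$, $(\boldsymbol{\Sigma}^{\mathbf{y}}\circ\boldsymbol{\Sigma}^{\mathbf{x}_{\mathrm A}})=\mathbf{0}_{l\times k_{\mathrm A}}$, and $(\boldsymbol{\Sigma}^{\mathbf{x}_{\mathrm A}}\circ\boldsymbol{\Sigma}^{\mathbf{x}_{\mathrm B}})=\mathbf{0}_{k_{\mathrm A}\times k_{\mathrm B}}$, with $(\boldsymbol{\Sigma}^{\mathbf{x}_{\mathrm A}}\circ\boldsymbol{\Sigma}^{\mathbf{x}_{\mathrm A}})$ and $(\boldsymbol{\Sigma}^{\mathbf{x}_{\mathrm B}}\circ\boldsymbol{\Sigma}^{\mathbf{x}_{\mathrm B}})$ invertible. Let $(\boldsymbol{\mu}_{\mathrm f|\mathbf{x}_{\mathrm B}},\mathbf{R}_{\mathrm f|\mathbf{x}_{\mathrm B}})$ and $(\boldsymbol{\mu}_{\mathrm s|\mathbf{x}_{\mathrm B}},\mathbf{R}_{\mathrm s|\mathbf{x}_{\mathrm B}})$ be the conditional filter and smoother statistics defined below. Then $\boldsymbol{\mu}_{\mathrm s|\mathbf{x}_{\mathrm B}}(t)=\boldsymbol{\mu}_{\mathrm f|\mathbf{x}_{\mathrm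 B}}(t)$ and $\mathbf{R}_{\mathrm s|\mathbf{x}_{\mathrm B}}(t)=\mathbf{R}_{\mathrm f|\mathbf{x}_{\mathrm B}}(t)$ for all $t\in[0,T]$; hence the Gaussian densities $p^{\mathrm s|\mathbf{x}_{\mathrm B}}_t(\mathbf{y}\mid\mathbf{x}_{\mathrm A})=\mathcal{N}(\boldsymbol{\mu}_{\mathrm s|\mathbf{x}_{\mathrm B}},\mathbf{R}_{\mathrm s|\mathbf{x}_{\mathrm B}})$ and $p^{\mathrm f|\mathbf{x}_{\mathrm B}}_t(\mathbf{y}\mid\mathbf{x}_{\mathrm A})=\mathcal{N}(\boldsymbol{\mu}_{\mathrm f|\mathbf{x}_{\mathrm B}},\mathbf{R}_{\mathrm f|\mathbf{x}_{\mathrm B}})$ coincide and their relative entropy is $0$ for every $t$ (no conditional assimilative causal link from $\mathbf{y}(t)$ to $\mathbf{x}_{\mathrm A}$ given $\mathbf{x}_{\mathrm B}$).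
   Context: CGNS: $\mathbf{x}\in\mathbb{R}^k$ (observed), $\mathbf{y}\in\mathbb{R}^l$ (unobserved), $d\mathbf{x}=(\boldsymbol{\Lambda}^{\mathbf{x}}(t,\mathbf{x})\mathbf{y}+\mathbf{f}^{\mathbf{x}}(t,\mathbf{x}))dt+\boldsymbol{\Sigma}^{\mathbf{x}}_1(t,\mathbf{x})d\mathbf{W}_1+\boldsymbol{\Sigma}^{\mathbf{x}}_2(t,\mathbf{x})d\mathbf{W}_2$, $d\mathbf{y}=(\boldsymbol{\Lambda}^{\mathbf{y}}(t,\mathbf{x})\mathbf{y}+\mathbf{f}^{\mathbf{y}}(t,\mathbf{x}))dt+\boldsymbol{\Sigma}^{\mathbf{y}}_1(t,\mathbf{x})d\mathbf{W}_1+\boldsymbol{\Sigma}^{\mathbf{y}}_2(t,\mathbf{x})d\mathbf{W}_2$, $\mathbf{W}_1,\mathbf{W}_2$ independent Wiener processes, standing regularity assumptions ensuring well-posedness of all equations below; coefficients evaluated at $(t,\mathbf{x}(t))$ along the observed path. The $\mathbf{x}$-coefficients are split in blocks: $\boldsymbol{\Lambda}^{\mathbf{x}}=\binom{\boldsymbol{\Lambda}^{\mathbf{x}_{\mathrm A}}}{\boldsymbol{\Lambda}^{\mathbf{x}_{\mathrm B}}}$, $\mathbf{f}^{\mathbf{x}}=\binom{\mathbf{f}^{\mathbf{x}_{\mathrm A}}}{\mathbf{f}^{\mathbf{x}_{\mathrm B}}}$, $\boldsymbol{\Sigma}^{\mathbf{x}}_m=\binom{\boldsymbol{\Sigma}^{\mathbf{x}_{\mathrm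 A}}_m}{\boldsymbol{\Sigma}^{\mathbf{x}_{\mathrm B}}_m}$. Notation: $(\boldsymbol{\Sigma}^{\mathbf{a}}\circ\boldsymbol{\Sigma}^{\mathbf{b}}):=\boldsymbol{\Sigma}^{\mathbf{a}}_1(\boldsymbol{\Sigma}^{\mathbf{b}}_1)^{\mathtt T}+\boldsymbol{\Sigma}^{\mathbf{a}}_2(\boldsymbol{\Sigma}^{\mathbf{b}}_2)^{\mathtt T}$. Conditioning on $\mathbf{x}_{\mathrm B}$ is implemented by assigning infinite observational uncertainty to $\mathbf{x}_{\mathrm B}$: under $(\boldsymbol{\Sigma}^{\mathbf{x}_{\mathrm A}}\circ\boldsymbol{\Sigma}^{\mathbf{x}_{\mathrm B}})=0$, $(\boldsymbol{\Sigma}^{\mathbf{x}}\circ\boldsymbol{\Sigma}^{\mathbf{x}})^{-1}=\mathrm{diag}((\boldsymbol{\Sigma}^{\mathbf{x}_{\mathrm A}}\circ\boldsymbol{\Sigma}^{\mathbf{x}_{\mathrm A}})^{-1},(\boldsymbol{\Sigma}^{\mathbf{x}_{\mathrm B}}\circ\boldsymbol{\Sigma}^{\mathbf{x}_{\mathrm B}})^{-1})$, and the limit $(\boldsymbol{\Sigma}^{\mathbf{x}_{\mathrm B}}\circ\boldsymbol{\Sigma}^{\mathbf{x}_{\mathrm B}})^{-1}\to0$ replaces it by $\boldsymbol{\Pi}:=\mathrm{diag}((\boldsymbol{\Sigma}^{\mathbf{x}_{\mathrm A}}\circ\boldsymbol{\Sigma}^{\mathbf{x}_{\mathrm A}})^{-1},\mathbf{0}_{k_{\mathrm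 B}\times k_{\mathrm B}})$. Define $\mathbf{K}_{\mathrm f|\mathbf{x}_{\mathrm B}}=((\boldsymbol{\Sigma}^{\mathbf{y}}\circ\boldsymbol{\Sigma}^{\mathbf{x}})+\mathbf{R}_{\mathrm f|\mathbf{x}_{\mathrm B}}(\boldsymbol{\Lambda}^{\mathbf{x}})^{\mathtt T})\boldsymbol{\Pi}$, $\mathbf{K}_{\mathrm s|\mathbf{x}_{\mathrm B}}=(\boldsymbol{\Sigma}^{\mathbf{y}}\circ\boldsymbol{\Sigma}^{\mathbf{x}})\boldsymbol{\Pi}$, $\mathbf{A}_{|\mathbf{x}_{\mathrm B}}=\boldsymbol{\Lambda}^{\mathbf{y}}-(\boldsymbol{\Sigma}^{\mathbf{y}}\circ\boldsymbol{\Sigma}^{\mathbf{x}})\boldsymbol{\Pi}\boldsymbol{\Lambda}^{\mathbf{x}}$, $\mathbf{B}_{|\mathbf{x}_{\mathrm B}}=(\boldsymbol{\Sigma}^{\mathbf{y}}\circ\boldsymbol{\Sigma}^{\mathbf{y}})-(\boldsymbol{\Sigma}^{\mathbf{y}}\circ\boldsymbol{\Sigma}^{\mathbf{x}})\boldsymbol{\Pi}(\boldsymbol{\Sigma}^{\mathbf{x}}\circ\boldsymbol{\Sigma}^{\mathbf{y}})$. The conditional filter statistics solve forward (from the usual filter initial condition) $d\boldsymbol{\mu}_{\mathrm f|\mathbf{x}_{\mathrm B}}=(\boldsymbol{\Lambda}^{\mathbf{y}}\boldsymbol{\mu}_{\mathrm f|\mathbf{x}_{\mathrm B}}+\mathbf{f}^{\mathbf{y}})dt+\mathbf{K}_{\mathrm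 f|\mathbf{x}_{\mathrm B}}(d\mathbf{x}-(\boldsymbol{\Lambda}^{\mathbf{x}}\boldsymbol{\mu}_{\mathrm f|\mathbf{x}_{\mathrm B}}+\mathbf{f}^{\mathbf{x}})dt)$, $d\mathbf{R}_{\mathrm f|\mathbf{x}_{\mathrm B}}=(\boldsymbol{\Lambda}^{\mathbf{y}}\mathbf{R}_{\mathrm f|\mathbf{x}_{\mathrm B}}+\mathbf{R}_{\mathrm f|\mathbf{x}_{\mathrm B}}(\boldsymbol{\Lambda}^{\mathbf{y}})^{\mathtt T}+(\boldsymbol{\Sigma}^{\mathbf{y}}\circ\boldsymbol{\Sigma}^{\mathbf{y}})-\mathbf{K}_{\mathrm f|\mathbf{x}_{\mathrm B}}(\boldsymbol{\Sigma}^{\mathbf{x}}\circ\boldsymbol{\Sigma}^{\mathbf{x}})\mathbf{K}_{\mathrm f|\mathbf{x}_{\mathrm B}}^{\mathtt T})dt$ (with $\mathbf{R}_{\mathrm f|\mathbf{x}_{\mathrm B}}$ invertible), and the conditional smoother statistics solve backward from $\boldsymbol{\mu}_{\mathrm s|\mathbf{x}_{\mathrm B}}(T)=\boldsymbol{\mu}_{\mathrm f|\mathbf{x}_{\mathrm B}}(T)$, $\mathbf{R}_{\mathrm s|\mathbf{x}_{\mathrm B}}(T)=\mathbf{R}_{\mathrm f|\mathbf{x}_{\mathrm B}}(T)$: $\overleftarrow{d\boldsymbol{\mu}_{\mathrm s|\mathbf{x}_{\mathrm B}}}=-(\boldsymbol{\Lambda}^{\mathbf{y}}\boldsymbol{\mu}_{\mathrm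 s|\mathbf{x}_{\mathrm B}}+\mathbf{f}^{\mathbf{y}}-\mathbf{B}_{|\mathbf{x}_{\mathrm B}}\mathbf{R}_{\mathrm f|\mathbf{x}_{\mathrm B}}^{-1}(\boldsymbol{\mu}_{\mathrm f|\mathbf{x}_{\mathrm B}}-\boldsymbol{\mu}_{\mathrm s|\mathbf{x}_{\mathrm B}}))dt+\mathbf{K}_{\mathrm s|\mathbf{x}_{\mathrm B}}(\overleftarrow{d\mathbf{x}}+(\boldsymbol{\Lambda}^{\mathbf{x}}\boldsymbol{\mu}_{\mathrm s|\mathbf{x}_{\mathrm B}}+\mathbf{f}^{\mathbf{x}})dt)$, $\overleftarrow{d\mathbf{R}_{\mathrm s|\mathbf{x}_{\mathrm B}}}=-((\mathbf{A}_{|\mathbf{x}_{\mathrm B}}+\mathbf{B}_{|\mathbf{x}_{\mathrm B}}\mathbf{R}_{\mathrm f|\mathbf{x}_{\mathrm B}}^{-1})\mathbf{R}_{\mathrm s|\mathbf{x}_{\mathrm B}}+\mathbf{R}_{\mathrm s|\mathbf{x}_{\mathrm B}}(\mathbf{A}_{|\mathbf{x}_{\mathrm B}}+\mathbf{B}_{|\mathbf{x}_{\mathrm B}}\mathbf{R}_{\mathrm f|\mathbf{x}_{\mathrm B}}^{-1})^{\mathtt T}-(\boldsymbol{\Sigma}^{\mathbf{y}}\circ\boldsymbol{\Sigma}^{\mathbf{y}})+\mathbf{K}_{\mathrm s|\mathbf{x}_{\mathrm B}}(\boldsymbol{\Sigma}^{\mathbf{x}}\circ\boldsymbol{\Sigma}^{\mathbf{x}})\mathbf{K}_{\mathrm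 s|\mathbf{x}_{\mathrm B}}^{\mathtt T})dt$, where $\overleftarrow{d\mathbf{u}}(t):=\lim_{\Delta t\to0^+}(\mathbf{u}(t)-\mathbf{u}(t+\Delta t))$ denotes the backward differential (backward Itô integral). *)

theory Defs
  imports "HOL-Analysis.Analysis"
begin

definition sigcirc ::
  "real^'d1^'m \<Rightarrow> real^'d2^'m \<Rightarrow> real^'d1^'n \<Rightarrow> real^'d2^'n \<Rightarrow> real^'n^'m" where
  "sigcirc A1 A2 B1 B2 = A1 ** transpose B1 + A2 ** transpose B2"

text \<open>Row blocks of an object indexed by the observed variable x = (x_A, x_B),
  where the index type of x is the disjoint sum 'ka + 'kb.\<close>
definition blkA :: "'c^('ka::finite + 'kb::finite) \<Rightarrow> 'c^'ka" where
  "blkA M = (\<chi> i. M $ Inl i)"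

definition blkB :: "'c^('ka::finite + 'kb::finite) \<Rightarrow> 'c^'kb" where
  "blkB M = (\<chi> i. M $ Inr i)"

definition PiMat :: "real^('ka::finite)^'ka \<Rightarrow> real^('ka + 'kb::finite)^('ka + 'kb)" where
  "PiMat CA = (\<chi> i j. case (i, j) of (Inl a, Inl b) \<Rightarrow> matrix_inv CA $ a $ b | _ \<Rightarrow> 0)"

definition Pi_of :: "real^('d1::finite)^('ka::finite + 'kb::finite) \<Rightarrow> real^('d2::finite)^('ka + 'kb)
    \<Rightarrow> real^('ka + 'kb)^('ka + 'kb)" where
  "Pi_of X1 X2 = PiMat (sigcirc (blkA X1) (blkA X2) (blkA X1) (blkA X2))"

definition gauss_density :: "real^'l \<Rightarrow> real^'l^'l \<Rightarrow> real^'l \<Rightarrow> real" where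
  "gauss_density mu R y =
     exp (- ((y - mu) \<bullet> (matrix_inv R *v (y - mu))) / 2) / sqrt ((2 * pi) ^ CARD('l) * det R)"

definition rel_entropy :: "(real^'l \<Rightarrow> real) \<Rightarrow> (real^'l \<Rightarrow> real) \<Rightarrow> real" where
  "rel_entropy p q = (\<integral>y. p y * ln (p y / q y) \<partial>lborel)"

end

theory Submission
  imports Defs
begin

(* Under the hypotheses both Kalman gains vanish: Pi only sees the x_A block, while
   Lambda^{x_A} = 0 and (Sigma^y o Sigma^{x_A}) = 0 make the x_A columns of the gains zero.
   The conditional filter thus reduces to the prior moment equations, and the backward smoother
   equations (now with B = Sigma^y o Sigma^y =: Q) retrace the same path: at R_s = R_f the smoother
   drift (Lambda + Q R_f^-1) R_f + R_f (Lambda + Q R_f^-1)^T - Q equals the filter drift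
   Lambda R_f + R_f Lambda^T + Q, because R_f is symmetric.  The differences mu_s - mu_f and
   R_s - R_f therefore solve linear backward integral equations with zero terminal value and
   vanish by Gronwall; symmetry of R_f follows in the same way, forward in time. *)

lemma matrix_add_rdistrib: "((A::real^'n^'m) + B) ** (C::real^'p^'n) = A ** C + B ** C"
  by (simp add: matrix_matrix_mult_def vec_eq_iff sum.distrib distrib_right)

lemma matrix_diff_ldistrib: "(A::real^'n^'m) ** ((B::real^'p^'n) - C) = A ** B - A ** C"
  by (simp add: matrix_matrix_mult_def vec_eq_iff sum_subtractf right_diff_distrib)

lemma matrix_diff_rdistrib: "((A::real^'n^'m) - B) ** (C::real^'p^'n) = A ** C - B ** C"
  by (simp add: matrix_matrix_mult_def vec_eq_iff sum_subtractf left_diff_distrib)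

lemma transpose_add: "transpose ((A::real^'n^'m) + B) = transpose A + transpose B"
  by (simp add: transpose_def vec_eq_iff)

lemma bounded_bilinear_matrix_matrix_mult:
  "bounded_bilinear (\<lambda>(A::real^'n^'m) (B::real^'p^'n). A ** B)"
  unfolding bilinear_conv_bounded_bilinear[symmetric] bilinear_def linear_iff
  by (auto simp: matrix_add_ldistrib matrix_add_rdistrib matrix_scalar_ac scalar_matrix_assoc)

lemma bounded_bilinear_matrix_vector_mult:
  "bounded_bilinear (\<lambda>(A::real^'n^'m) (x::real^'n). A *v x)"
  unfolding bilinear_conv_bounded_bilinear[symmetric] bilinear_def linear_iff
  by (auto simp: vec_eq_iff matrix_vector_mult_def sum_distrib_left scaleR_sum_right sum.distrib
      algebra_simps)

lemma bounded_linear_transpose: "bounded_linear (transpose :: real^'n^'m \<Rightarrow> real^'m^'n)"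
  unfolding linear_conv_bounded_linear[symmetric] linear_iff
  by (auto simp: transpose_add transpose_scalar)

lemma bounded_bilinear_lyapunov:
  "bounded_bilinear (\<lambda>(A::real^'n^'n) (X::real^'n^'n). A ** X + X ** transpose A)"
  unfolding bilinear_conv_bounded_bilinear[symmetric] bilinear_def linear_iff
  by (auto simp: matrix_add_ldistrib matrix_add_rdistrib transpose_add transpose_scalar
      matrix_scalar_ac scalar_matrix_assoc algebra_simps)

lemma continuous_on_matrix_matrix_mult [continuous_intros]:
  "continuous_on S f \<Longrightarrow> continuous_on S g
    \<Longrightarrow> continuous_on S (\<lambda>x. (f x::real^'n^'m) ** (g x::real^'p^'n))"
  using bounded_bilinear.continuous_on[OF bounded_bilinear_matrix_matrix_mult] by blast

lemma continuous_on_matrix_vector_mult [continuous_intros]: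
  "continuous_on S f \<Longrightarrow> continuous_on S g
    \<Longrightarrow> continuous_on S (\<lambda>x. (f x::real^'n^'m) *v (g x::real^'n))"
  using bounded_bilinear.continuous_on[OF bounded_bilinear_matrix_vector_mult] by blast

lemma continuous_on_transpose [continuous_intros]:
  "continuous_on S f \<Longrightarrow> continuous_on S (\<lambda>x. transpose (f x::real^'n^'m))"
  using bounded_linear.continuous_on[OF bounded_linear_transpose] by blast

lemma continuous_on_det [continuous_intros]:
  "continuous_on S f \<Longrightarrow> continuous_on S (\<lambda>x. det (f x::real^'n^'n))"
  unfolding det_def by (intro continuous_intros) auto

lemma continuous_on_sigcirc [continuous_intros]:
  "continuous_on S f1 \<Longrightarrow> continuous_on S f2 \<Longrightarrow> continuous_on S g1 \<Longrightarrow> continuous_on S g2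
    \<Longrightarrow> continuous_on S (\<lambda>x. sigcirc (f1 x) (f2 x) (g1 x) (g2 x))"
  unfolding sigcirc_def by (intro continuous_intros)

lemma transpose_sigcirc_self: "transpose (sigcirc A1 A2 A1 A2) = sigcirc A1 A2 A1 A2"
  by (simp add: sigcirc_def transpose_add matrix_transpose_mul)

lemma matrix_inv_right: "invertible (A::real^'n^'n) \<Longrightarrow> A ** matrix_inv A = mat 1"
  and matrix_inv_left: "invertible (A::real^'n^'n) \<Longrightarrow> matrix_inv A ** A = mat 1"
  unfolding invertible_def matrix_inv_def by (metis (mono_tags, lifting) someI_ex)+

lemma matrix_inv_cramer:
  assumes "invertible (A::real^'n^'n)"
  shows "matrix_inv A = (\<chi> i j. det (\<chi> r c. if c = i then axis j 1 $ r else A $ r $ c) / det A)"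
proof -
  have "A *v (matrix_inv A *v axis j 1) = axis j 1" for j
    using matrix_inv_right[OF assms] by (simp add: matrix_vector_mul_assoc)
  then have "matrix_inv A *v axis j 1
      = (\<chi> k. det (\<chi> r c. if c = k then axis j 1 $ r else A $ r $ c) / det A)" for j
    using cramer invertible_det_nz[of A] assms by blast
  moreover have "(matrix_inv A *v axis j 1) $ i = matrix_inv A $ i $ j" for i j
    by (simp add: matrix_vector_mult_def axis_def if_distrib cong: if_cong)
  ultimately show ?thesis by (simp add: vec_eq_iff)
qed

lemma continuous_on_matrix_inv:
  assumes "continuous_on S f" "\<And>x. x \<in> S \<Longrightarrow> invertible (f x::real^'n^'n)"
  shows "continuous_on S (\<lambda>x. matrix_inv (f x))"
proof -
  have if_const: "continuous_on S (\<lambda>x. if P then c else g x)" if "continuous_on S g"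
    for P and c :: real and g
    using that by (cases P) auto
  have "continuous_on S (\<lambda>x. (\<chi> i j. det (\<chi> r c. if c = i then axis j 1 $ r else f x $ r $ c)
      / det (f x)) :: real^'n^'n)"
    using assms invertible_det_nz
    by (intro continuous_intros continuous_on_vec_lambda continuous_on_divide if_const) auto
  then show ?thesis
    by (rule continuous_on_cong[THEN iffD1, rotated 2]) (auto simp: matrix_inv_cramer assms)
qed

lemma gronwall_backward_eq_0:
  fixes g :: "real \<Rightarrow> real"
  assumes cont: "continuous_on {a..b} g" and nonneg: "\<And>t. t \<in> {a..b} \<Longrightarrow> 0 \<le> g t"
    and bound: "\<And>t. t \<in> {a..b} \<Longrightarrow> g t \<le> C * integral {t..b} g" and "0 \<le> C"
    and t: "t \<in> {a..b}"
  shows "g t = 0"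
proof -
  define F where "F = (\<lambda>u. integral {u..b} g)"
  define H where "H = (\<lambda>u. exp (C * u) * F u)"
  have dH: "(H has_real_derivative exp (C * x) * (C * F x - g x)) (at x within {a..b})"
    if "x \<in> {a..b}" for x
  proof -
    have "(F has_real_derivative - g x) (at x within {a..b})"
      using integral_has_vector_derivative'[OF cont that]
      by (simp add: F_def has_real_derivative_iff_has_vector_derivative)
    then show ?thesis
      unfolding H_def by (auto intro!: derivative_eq_intros simp: algebra_simps)
  qed
  have "H t \<le> H b"
  proof (rule DERIV_nonneg_imp_increasing_open[where f = H])
    show "t \<le> b" using t by auto
    have "continuous_on {a..b} H"
      using dH by (meson DERIV_continuous continuous_on_eq_continuous_within)
    then show "continuous_on {t..b} H"
      by (rule continuous_on_subset) (use t in auto)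
  next
    fix x assume x: "t < x" "x < b"
    then have "at x within {a..b} = at x" using t by (intro at_within_Icc_at) auto
    moreover have "0 \<le> exp (C * x) * (C * F x - g x)"
      using bound[of x] x t by (simp add: F_def)
    ultimately show "\<exists>y. DERIV H x :> y \<and> 0 \<le> y" using dH[of x] x t by auto
  qed
  then have "exp (C * t) * F t \<le> 0" by (simp add: H_def F_def)
  then have "F t \<le> 0" by (simp add: mult_le_0_iff)
  moreover have "0 \<le> F t"
    unfolding F_def using t nonneg
    by (intro integral_nonneg integrable_continuous_interval continuous_on_subset[OF cont]) auto
  ultimately show ?thesis using bound[OF t] nonneg[OF t] \<open>0 \<le> C\<close> by (simp add: F_def)
qed

lemma bounded_bilinear_backward_eq_0:
  fixes prod :: "'m::real_normed_vector \<Rightarrow> 'a::euclidean_space \<Rightarrow> 'a" and a b :: real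
  assumes "bounded_bilinear prod"
    and cont_M: "continuous_on {a..b} M" and cont_u: "continuous_on {a..b} u"
    and eq: "\<And>t. t \<in> {a..b} \<Longrightarrow> u t = integral {t..b} (\<lambda>s. prod (M s) (u s))"
    and t: "t \<in> {a..b}"
  shows "u t = 0"
proof -
  interpret bounded_bilinear prod by fact
  obtain K where K: "0 < K" "\<And>x y. norm (prod x y) \<le> norm x * norm y * K"
    using pos_bounded by blast
  obtain B where B: "0 \<le> B" "\<And>s. s \<in> {a..b} \<Longrightarrow> norm (M s) \<le> B"
    using continuous_on_compact_bound[OF compact_Icc cont_M] by blast
  have bound: "norm (prod (M s) (u s)) \<le> (B * K) * norm (u s)" if "s \<in> {a..b}" for s
  proof -
    have "norm (prod (M s) (u s)) \<le> norm (M s) * norm (u s) * K" by (rule K(2))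
    also have "\<dots> \<le> B * norm (u s) * K"
      using B(2)[OF that] K(1) by (intro mult_right_mono) auto
    finally show ?thesis by (simp add: algebra_simps)
  qed
  have "norm (u t) = 0"
  proof (rule gronwall_backward_eq_0[where g = "\<lambda>s. norm (u s)" and a = a and b = b and C = "B * K"])
    show "continuous_on {a..b} (\<lambda>s. norm (u s))" using cont_u by (intro continuous_intros)
    fix s assume s: "s \<in> {a..b}"
    have "norm (u s) \<le> integral {s..b} (\<lambda>r. (B * K) * norm (u r))"
      unfolding eq[OF s] using s bound
      by (intro integral_norm_bound_integral integrable_continuous_interval continuous_intros
          continuous_on_subset[OF bounded_bilinear.continuous_on[OF assms(1) cont_M cont_u]]
          continuous_on_subset[OF cont_u]) auto
    then show "norm (u s) \<le> B * K * integral {s..b} (\<lambda>r. norm (u r))" by simp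
  qed (use B K t in auto)
  then show ?thesis by simp
qed

lemma bounded_bilinear_forward_eq_0:
  fixes prod :: "'m::real_normed_vector \<Rightarrow> 'a::euclidean_space \<Rightarrow> 'a" and a b :: real
  assumes "bounded_bilinear prod"
    and cont_M: "continuous_on {a..b} M" and cont_u: "continuous_on {a..b} u"
    and eq: "\<And>t. t \<in> {a..b} \<Longrightarrow> u t = integral {a..t} (\<lambda>s. prod (M s) (u s))"
    and t: "t \<in> {a..b}"
  shows "u t = 0"
proof -
  have reflect: "continuous_on {-b..-a} (\<lambda>s. f (- s))" if "continuous_on {a..b} f"
    for f :: "real \<Rightarrow> 'c::topological_space"
    by (intro continuous_on_compose2[OF that] continuous_intros) auto
  have "(\<lambda>s. u (- s)) (- t) = 0"
  proof (rule bounded_bilinear_backward_eq_0[OF assms(1) reflect[OF cont_M] reflect[OF cont_u]])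
    fix s assume "s \<in> {-b..-a}"
    then show "u (- s) = integral {s..-a} (\<lambda>r. prod (M (- r)) (u (- r)))"
      using eq[of "- s"]
        Henstock_Kurzweil_Integration.integral_reflect_real[of "- s" a "\<lambda>r. prod (M r) (u r)"]
      by simp
  qed (use t in auto)
  then show ?thesis by simp
qed

lemma integral_eq_from_end:
  fixes u h :: "real \<Rightarrow> 'a::banach"
  assumes cont: "continuous_on {a..b} h"
    and eq: "\<And>t. t \<in> {a..b} \<Longrightarrow> u t = u a + integral {a..t} h" and t: "t \<in> {a..b}"
  shows "u t = u b - integral {t..b} h"
proof -
  have "integral {a..t} h + integral {t..b} h = integral {a..b} h"
    using t by (intro Henstock_Kurzweil_Integration.integral_combine integrable_continuous_interval cont) auto
  then show ?thesis using eq[OF t] eq[of b] t by (simp add: algebra_simps)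
qed

lemma filter_covariance_symmetric:
  fixes L Q R :: "real \<Rightarrow> real^'n^'n"
  assumes cont: "continuous_on {a..b} L" "continuous_on {a..b} Q" "continuous_on {a..b} R"
    and Q_sym: "\<And>s. transpose (Q s) = Q s" and R_sym: "transpose (R a) = R a"
    and R_eq: "\<And>t. t \<in> {a..b} \<Longrightarrow>
      R t = R a + integral {a..t} (\<lambda>s. L s ** R s + R s ** transpose (L s) + Q s)"
    and t: "t \<in> {a..b}"
  shows "transpose (R t) = R t"
proof -
  define F where "F s = L s ** R s + R s ** transpose (L s) + Q s" for s
  have cont_F: "continuous_on {a..b} F" unfolding F_def using cont by (intro continuous_intros)
  have "R t - transpose (R t) = 0"
  proof (rule bounded_bilinear_forward_eq_0[OF bounded_bilinear_lyapunov cont(1)])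
    show "continuous_on {a..b} (\<lambda>s. R s - transpose (R s))" using cont by (intro continuous_intros)
  next
    fix t assume t: "t \<in> {a..b}"
    have int: "F integrable_on {a..t}" "(\<lambda>s. transpose (F s)) integrable_on {a..t}"
      using t by (auto intro!: integrable_continuous_interval continuous_on_transpose
          intro: continuous_on_subset[OF cont_F])
    have "transpose (integral {a..t} F) = integral {a..t} (\<lambda>s. transpose (F s))"
      using integral_linear[OF int(1) bounded_linear_transpose] by (simp add: o_def)
    then have "R t - transpose (R t) = integral {a..t} (\<lambda>s. F s - transpose (F s))"
      using R_eq[OF t] R_sym by (simp add: F_def[symmetric] transpose_add integral_diff[OF int])
    also have "(\<lambda>s. F s - transpose (F s))
      = (\<lambda>s. L s ** (R s - transpose (R s)) + (R s - transpose (R s)) ** transpose (L s))"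
      by (simp add: F_def Q_sym transpose_add matrix_transpose_mul matrix_diff_ldistrib
          matrix_diff_rdistrib fun_eq_iff)
    finally show "R t - transpose (R t) = integral {a..t}
      (\<lambda>s. L s ** (R s - transpose (R s)) + (R s - transpose (R s)) ** transpose (L s))" .
  qed (use t in auto)
  then show ?thesis by simp
qed

lemma smoother_mean_eq_filter_mean:
  fixes L P :: "real \<Rightarrow> real^'n^'n" and f mf ms :: "real \<Rightarrow> real^'n"
  assumes cont: "continuous_on {a..b} L" "continuous_on {a..b} P" "continuous_on {a..b} f"
      "continuous_on {a..b} mf" "continuous_on {a..b} ms"
    and mf_eq: "\<And>t. t \<in> {a..b} \<Longrightarrow> mf t = mf b - integral {t..b} (\<lambda>s. L s *v mf s + f s)"
    and ms_eq: "\<And>t. t \<in> {a..b} \<Longrightarrow>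
      ms t = ms b - integral {t..b} (\<lambda>s. L s *v ms s + f s - P s *v (mf s - ms s))"
    and end_eq: "ms b = mf b" and t: "t \<in> {a..b}"
  shows "ms t = mf t"
proof -
  have "ms t - mf t = 0"
  proof (rule bounded_bilinear_backward_eq_0[OF bounded_bilinear_matrix_vector_mult,
        where M = "\<lambda>s. - (L s + P s)"])
    show "continuous_on {a..b} (\<lambda>s. - (L s + P s))" using cont by (intro continuous_intros)
    show "continuous_on {a..b} (\<lambda>s. ms s - mf s)" using cont by (intro continuous_intros)
  next
    fix t assume t: "t \<in> {a..b}"
    have "ms t - mf t = integral {t..b} (\<lambda>s. L s *v mf s + f s)
        - integral {t..b} (\<lambda>s. L s *v ms s + f s - P s *v (mf s - ms s))"
      using mf_eq[OF t] ms_eq[OF t] end_eq by simp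
    also have "\<dots> = integral {t..b}
        (\<lambda>s. (L s *v mf s + f s) - (L s *v ms s + f s - P s *v (mf s - ms s)))"
      using t cont
      by (intro integral_diff[symmetric] integrable_continuous_interval continuous_intros)
        (auto intro: continuous_on_subset)
    also have "(\<lambda>s. (L s *v mf s + f s) - (L s *v ms s + f s - P s *v (mf s - ms s)))
        = (\<lambda>s. - (L s + P s) *v (ms s - mf s))"
      by (simp add: fun_eq_iff bounded_bilinear.minus_left[OF bounded_bilinear_matrix_vector_mult]
          algebra_simps)
    finally show "ms t - mf t = integral {t..b} (\<lambda>s. - (L s + P s) *v (ms s - mf s))" .
  qed (use t in auto)
  then show ?thesis by simp
qed

lemma smoother_drift_at_filter_covariance:
  fixes L Q R :: "real^'n^'n"
  assumes "invertible R" "transpose R = R" "transpose Q = Q"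
  defines "A \<equiv> L + Q ** matrix_inv R"
  shows "A ** R + R ** transpose A - Q = L ** R + R ** transpose L + Q"
proof -
  have left: "matrix_inv R ** R = mat 1" by (rule matrix_inv_left[OF assms(1)])
  have "R ** transpose (matrix_inv R) = transpose (matrix_inv R ** R)"
    using assms(2) by (simp add: matrix_transpose_mul)
  then have right: "R ** transpose (matrix_inv R) = mat 1" by (simp add: left)
  have "A ** R = L ** R + Q"
    by (simp add: A_def matrix_add_rdistrib matrix_mul_assoc[symmetric] left)
  moreover have "R ** transpose A = R ** transpose L + Q"
    by (simp add: A_def transpose_add matrix_add_ldistrib matrix_transpose_mul matrix_mul_assoc
        right assms(3))
  ultimately show ?thesis by simp
qed

lemma smoother_covariance_eq_filter_covariance:
  fixes L Q Rf Rs :: "real \<Rightarrow> real^'n^'n"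
  assumes cont: "continuous_on {a..b} L" "continuous_on {a..b} Q"
      "continuous_on {a..b} Rf" "continuous_on {a..b} Rs"
    and Rf_inv: "\<And>s. s \<in> {a..b} \<Longrightarrow> invertible (Rf s)"
    and Rf_sym: "\<And>s. s \<in> {a..b} \<Longrightarrow> transpose (Rf s) = Rf s"
    and Q_sym: "\<And>s. transpose (Q s) = Q s"
    and Rf_eq: "\<And>t. t \<in> {a..b} \<Longrightarrow>
      Rf t = Rf b - integral {t..b} (\<lambda>s. L s ** Rf s + Rf s ** transpose (L s) + Q s)"
    and Rs_eq: "\<And>t. t \<in> {a..b} \<Longrightarrow>
      Rs t = Rs b - integral {t..b} (\<lambda>s. (L s + Q s ** matrix_inv (Rf s)) ** Rs s
        + Rs s ** transpose (L s + Q s ** matrix_inv (Rf s)) - Q s)"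
    and end_eq: "Rs b = Rf b" and t: "t \<in> {a..b}"
  shows "Rs t = Rf t"
proof -
  define A where "A s = L s + Q s ** matrix_inv (Rf s)" for s
  have cont_A: "continuous_on {a..b} A"
    unfolding A_def using cont Rf_inv by (intro continuous_intros continuous_on_matrix_inv)
  have "Rs t - Rf t = 0"
  proof (rule bounded_bilinear_backward_eq_0[OF bounded_bilinear_lyapunov, where M = "\<lambda>s. - A s"])
    show "continuous_on {a..b} (\<lambda>s. - A s)" using cont_A by (intro continuous_intros)
    show "continuous_on {a..b} (\<lambda>s. Rs s - Rf s)" using cont by (intro continuous_intros)
  next
    fix t assume t: "t \<in> {a..b}"
    have "integral {t..b} (\<lambda>s. A s ** Rf s + Rf s ** transpose (A s) - Q s)
        = integral {t..b} (\<lambda>s. L s ** Rf s + Rf s ** transpose (L s) + Q s)"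
      using t Rf_inv Rf_sym Q_sym
      by (intro integral_cong) (simp add: A_def smoother_drift_at_filter_covariance)
    then have "Rs t - Rf t = integral {t..b} (\<lambda>s. A s ** Rf s + Rf s ** transpose (A s) - Q s)
        - integral {t..b} (\<lambda>s. A s ** Rs s + Rs s ** transpose (A s) - Q s)"
      using Rf_eq[OF t] Rs_eq[OF t] end_eq by (simp add: A_def)
    also have "\<dots> = integral {t..b} (\<lambda>s. (A s ** Rf s + Rf s ** transpose (A s) - Q s)
        - (A s ** Rs s + Rs s ** transpose (A s) - Q s))"
      using t cont cont_A
      by (intro integral_diff[symmetric] integrable_continuous_interval continuous_intros)
        (auto intro: continuous_on_subset)
    also have "(\<lambda>s. (A s ** Rf s + Rf s ** transpose (A s) - Q s)
        - (A s ** Rs s + Rs s ** transpose (A s) - Q s))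
      = (\<lambda>s. - A s ** (Rs s - Rf s) + (Rs s - Rf s) ** transpose (- A s))"
      by (simp add: fun_eq_iff matrix_diff_ldistrib matrix_diff_rdistrib algebra_simps
          bounded_bilinear.minus_left[OF bounded_bilinear_matrix_matrix_mult]
          bounded_bilinear.minus_right[OF bounded_bilinear_matrix_matrix_mult]
          linear_neg[OF bounded_linear.linear[OF bounded_linear_transpose]])
    finally show "Rs t - Rf t = integral {t..b}
      (\<lambda>s. - A s ** (Rs s - Rf s) + (Rs s - Rf s) ** transpose (- A s))" .
  qed (use t in auto)
  then show ?thesis by simp
qed

lemma smoother_eq_filter_without_gain:
  fixes L Q Rf Rs :: "real \<Rightarrow> real^'n^'n" and f mf ms :: "real \<Rightarrow> real^'n"
  assumes cont: "continuous_on {a..b} L" "continuous_on {a..b} Q" "continuous_on {a..b} f"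
      "continuous_on {a..b} mf" "continuous_on {a..b} ms"
      "continuous_on {a..b} Rf" "continuous_on {a..b} Rs"
    and Q_sym: "\<And>s. transpose (Q s) = Q s"
    and Rf_inv: "\<And>s. s \<in> {a..b} \<Longrightarrow> invertible (Rf s)"
    and Rf_sym: "transpose (Rf a) = Rf a"
    and mf_eq: "\<And>t. t \<in> {a..b} \<Longrightarrow> mf t = mf a + integral {a..t} (\<lambda>s. L s *v mf s + f s)"
    and Rf_eq: "\<And>t. t \<in> {a..b} \<Longrightarrow>
      Rf t = Rf a + integral {a..t} (\<lambda>s. L s ** Rf s + Rf s ** transpose (L s) + Q s)"
    and ms_eq: "\<And>t. t \<in> {a..b} \<Longrightarrow> ms t = ms b - integral {t..b}
      (\<lambda>s. L s *v ms s + f s - (Q s ** matrix_inv (Rf s)) *v (mf s - ms s))"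
    and Rs_eq: "\<And>t. t \<in> {a..b} \<Longrightarrow>
      Rs t = Rs b - integral {t..b} (\<lambda>s. (L s + Q s ** matrix_inv (Rf s)) ** Rs s
        + Rs s ** transpose (L s + Q s ** matrix_inv (Rf s)) - Q s)"
    and end_eq: "ms b = mf b" "Rs b = Rf b" and t: "t \<in> {a..b}"
  shows "ms t = mf t \<and> Rs t = Rf t"
proof
  have cont_drifts: "continuous_on {a..b} (\<lambda>s. L s *v mf s + f s)"
      "continuous_on {a..b} (\<lambda>s. L s ** Rf s + Rf s ** transpose (L s) + Q s)"
    using cont by (auto intro!: continuous_intros)
  have cont_P: "continuous_on {a..b} (\<lambda>s. Q s ** matrix_inv (Rf s))"
    using cont Rf_inv by (intro continuous_intros continuous_on_matrix_inv)
  show "ms t = mf t"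
    by (rule smoother_mean_eq_filter_mean[OF cont(1) cont_P cont(3-5)
          integral_eq_from_end[OF cont_drifts(1) mf_eq] ms_eq end_eq(1) t])
  have Rf_sym_all: "\<And>s. s \<in> {a..b} \<Longrightarrow> transpose (Rf s) = Rf s"
    by (rule filter_covariance_symmetric[OF cont(1,2,6) Q_sym Rf_sym Rf_eq])
  show "Rs t = Rf t"
    by (rule smoother_covariance_eq_filter_covariance[OF cont(1,2,6,7) Rf_inv Rf_sym_all Q_sym
          integral_eq_from_end[OF cont_drifts(2) Rf_eq] Rs_eq end_eq(2) t])
qed

lemma matrix_mult_PiMat_eq_0:
  assumes "\<And>i a. M $ i $ Inl a = (0::real)"
  shows "M ** PiMat C = 0"
proof -
  have "M $ i $ k * PiMat C $ k $ j = 0" for i k j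
    using assms by (cases k; cases j) (auto simp: PiMat_def)
  then show ?thesis
    unfolding matrix_matrix_mult_def vec_eq_iff by (auto intro!: sum.neutral simp del: mult_eq_0_iff)
qed

lemma sigcirc_Inl_column:
  "sigcirc A1 A2 B1 B2 $ i $ Inl a = sigcirc A1 A2 (blkA B1) (blkA B2) $ i $ a"
  by (simp add: sigcirc_def matrix_matrix_mult_def transpose_def blkA_def)

lemma sigcirc_mult_Pi_of_eq_0:
  "sigcirc Y1 Y2 (blkA X1) (blkA X2) = 0 \<Longrightarrow> sigcirc Y1 Y2 X1 X2 ** Pi_of X1 X2 = 0"
  unfolding Pi_of_def by (rule matrix_mult_PiMat_eq_0) (simp add: sigcirc_Inl_column)

lemma transpose_mult_Pi_of_eq_0:
  assumes "blkA L = 0"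
  shows "(R ** transpose L) ** Pi_of X1 X2 = 0"
proof -
  have "L $ Inl a $ k = 0" for a k
    using arg_cong[OF assms, of "\<lambda>M. M $ a $ k"] by (simp add: blkA_def)
  then show ?thesis
    unfolding Pi_of_def
    by (intro matrix_mult_PiMat_eq_0) (simp add: matrix_matrix_mult_def transpose_def)
qed

lemma rel_entropy_self: "rel_entropy p p = 0"
proof -
  have "p y * ln (p y / p y) = 0" for y
    by (cases "p y = 0") auto
  then show ?thesis by (simp only: rel_entropy_def) simp
qed

theorem mainTheorem3:
  fixes T :: real
    and LamX :: "real \<Rightarrow> real^('l::finite)^('ka::finite + 'kb::finite)" and fX :: "real \<Rightarrow> real^('ka + 'kb)"
    and SX1 :: "real \<Rightarrow> real^('d1::finite)^('ka + 'kb)" and SX2 :: "real \<Rightarrow> real^('d2::finite)^('ka + 'kb)"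
    and LamY :: "real \<Rightarrow> real^'l^'l" and fY :: "real \<Rightarrow> real^'l"
    and SY1 :: "real \<Rightarrow> real^'d1^'l" and SY2 :: "real \<Rightarrow> real^'d2^'l"
    and Ifwd :: "(real \<Rightarrow> real^('ka + 'kb)^'l) \<Rightarrow> real \<Rightarrow> real^'l"
    and Ibwd :: "(real \<Rightarrow> real^('ka + 'kb)^'l) \<Rightarrow> real \<Rightarrow> real^'l"
    and muf mus :: "real \<Rightarrow> real^'l"
    and Rf Rs :: "real \<Rightarrow> real^'l^'l"
  defines "Kf \<equiv> \<lambda>t. (sigcirc (SY1 t) (SY2 t) (SX1 t) (SX2 t) + Rf t ** transpose (LamX t)) ** Pi_of (SX1 t) (SX2 t)"
    and "Ks \<equiv> \<lambda>t. sigcirc (SY1 t) (SY2 t) (SX1 t) (SX2 t) ** Pi_of (SX1 t) (SX2 t)"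
    and "Ac \<equiv> \<lambda>t. LamY t - sigcirc (SY1 t) (SY2 t) (SX1 t) (SX2 t) ** Pi_of (SX1 t) (SX2 t) ** LamX t"
    and "Bc \<equiv> \<lambda>t. sigcirc (SY1 t) (SY2 t) (SY1 t) (SY2 t)
                 - sigcirc (SY1 t) (SY2 t) (SX1 t) (SX2 t) ** Pi_of (SX1 t) (SX2 t) ** sigcirc (SX1 t) (SX2 t) (SY1 t) (SY2 t)"
  assumes T: "0 \<le> T"
    \<comment> \<open>structural hypotheses of the theorem\<close>
    and hLamA: "\<And>t. blkA (LamX t) = 0"
    and hYA: "\<And>t. sigcirc (SY1 t) (SY2 t) (blkA (SX1 t)) (blkA (SX2 t)) = 0"
    and hAB: "\<And>t. sigcirc (blkA (SX1 t)) (blkA (SX2 t)) (blkB (SX1 t)) (blkB (SX2 t)) = 0"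
    and hinvA: "\<And>t. invertible (sigcirc (blkA (SX1 t)) (blkA (SX2 t)) (blkA (SX1 t)) (blkA (SX2 t)))"
    and hinvB: "\<And>t. invertible (sigcirc (blkB (SX1 t)) (blkB (SX2 t)) (blkB (SX1 t)) (blkB (SX2 t)))"
    \<comment> \<open>regularity (well-posedness) of the coefficients along the observed path\<close>
    and cLamX: "continuous_on {0..T} LamX" and cfX: "continuous_on {0..T} fX"
    and cSX1: "continuous_on {0..T} SX1" and cSX2: "continuous_on {0..T} SX2"
    and cLamY: "continuous_on {0..T} LamY" and cfY: "continuous_on {0..T} fY"
    and cSY1: "continuous_on {0..T} SY1" and cSY2: "continuous_on {0..T} SY2"
    \<comment> \<open>forward / backward Ito integrals against the observed path x: linear in the integrand\<close>
    and Ifwd_add: "\<And>G H t. Ifwd (\<lambda>s. G s + H s) t = Ifwd G t + Ifwd H t"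
    and Ifwd_scale: "\<And>c G t. Ifwd (\<lambda>s. c *\<^sub>R G s) t = c *\<^sub>R Ifwd G t"
    and Ibwd_add: "\<And>G H t. Ibwd (\<lambda>s. G s + H s) t = Ibwd G t + Ibwd H t"
    and Ibwd_scale: "\<And>c G t. Ibwd (\<lambda>s. c *\<^sub>R G s) t = c *\<^sub>R Ibwd G t"
    \<comment> \<open>conditional filter statistics (forward equations, integral form)\<close>
    and cmuf: "continuous_on {0..T} muf" and cRf: "continuous_on {0..T} Rf"
    and Rf0_sym: "transpose (Rf 0) = Rf 0"
    and Rf_inv: "\<And>t. t \<in> {0..T} \<Longrightarrow> invertible (Rf t)"
    and muf_eq: "\<And>t. t \<in> {0..T} \<Longrightarrow>
        muf t = muf 0
          + integral {0..t} (\<lambda>s. LamY s *v muf s + fY s - Kf s *v (LamX s *v muf s + fX s))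
          + Ifwd Kf t"
    and Rf_eq: "\<And>t. t \<in> {0..T} \<Longrightarrow>
        Rf t = Rf 0
          + integral {0..t} (\<lambda>s. LamY s ** Rf s + Rf s ** transpose (LamY s)
              + sigcirc (SY1 s) (SY2 s) (SY1 s) (SY2 s)
              - Kf s ** sigcirc (SX1 s) (SX2 s) (SX1 s) (SX2 s) ** transpose (Kf s))"
    \<comment> \<open>conditional smoother statistics (backward equations, integral form)\<close>
    and cmus: "continuous_on {0..T} mus" and cRs: "continuous_on {0..T} Rs"
    and mus_T: "mus T = muf T" and Rs_T: "Rs T = Rf T"
    and mus_eq: "\<And>t. t \<in> {0..T} \<Longrightarrow>
        mus t = mus T
          - integral {t..T} (\<lambda>s. LamY s *v mus s + fY s
              - Bc s *v (matrix_inv (Rf s) *v (muf s - mus s)))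
          + integral {t..T} (\<lambda>s. Ks s *v (LamX s *v mus s + fX s))
          + Ibwd Ks t"
    and Rs_eq: "\<And>t. t \<in> {0..T} \<Longrightarrow>
        Rs t = Rs T
          - integral {t..T} (\<lambda>s. (Ac s + Bc s ** matrix_inv (Rf s)) ** Rs s
              + Rs s ** transpose (Ac s + Bc s ** matrix_inv (Rf s))
              - sigcirc (SY1 s) (SY2 s) (SY1 s) (SY2 s)
              + Ks s ** sigcirc (SX1 s) (SX2 s) (SX1 s) (SX2 s) ** transpose (Ks s))"
  shows "\<forall>t\<in>{0..T}. mus t = muf t \<and> Rs t = Rf t
           \<and> gauss_density (mus t) (Rs t) = gauss_density (muf t) (Rf t)
           \<and> rel_entropy (gauss_density (mus t) (Rs t)) (gauss_density (muf t) (Rf t)) = 0"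
proof -
  define Q where "Q s = sigcirc (SY1 s) (SY2 s) (SY1 s) (SY2 s)" for s
  \<comment> \<open>Pi vanishes outside its x_A block and both gains have zero x_A columns, so the gains vanish.\<close>
  have gain_0: "sigcirc (SY1 s) (SY2 s) (SX1 s) (SX2 s) ** Pi_of (SX1 s) (SX2 s) = 0" for s
    by (rule sigcirc_mult_Pi_of_eq_0[OF hYA])
  have gains: "Kf = (\<lambda>s. 0)" "Ks = (\<lambda>s. 0)" "Ac = LamY" "Bc = Q"
    by (simp_all add: fun_eq_iff Kf_def Ks_def Ac_def Bc_def Q_def matrix_add_rdistrib gain_0
        transpose_mult_Pi_of_eq_0[OF hLamA])
  have stochastic_integrals: "Ifwd (\<lambda>s. 0) t = 0" "Ibwd (\<lambda>s. 0) t = 0" for t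
    using Ifwd_scale[of 0 "\<lambda>s. 0" t] Ibwd_scale[of 0 "\<lambda>s. 0" t] by simp_all
  note reduced = gains stochastic_integrals Q_def[symmetric] matrix_vector_mul_assoc
  have cont_Q: "continuous_on {0..T} Q" and Q_sym: "\<And>s. transpose (Q s) = Q s"
    using cSY1 cSY2 by (simp_all add: Q_def transpose_sigcirc_self continuous_on_sigcirc)
  have Rf_fwd: "Rf t = Rf 0 + integral {0..t} (\<lambda>s. LamY s ** Rf s + Rf s ** transpose (LamY s) + Q s)"
    and muf_fwd: "muf t = muf 0 + integral {0..t} (\<lambda>s. LamY s *v muf s + fY s)"
    if "t \<in> {0..T}" for t
    using Rf_eq[OF that] muf_eq[OF that] by (simp_all add: reduced)
  have mus_bwd: "mus t = mus T - integral {t..T}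
      (\<lambda>s. LamY s *v mus s + fY s - (Q s ** matrix_inv (Rf s)) *v (muf s - mus s))"
    and Rs_bwd: "Rs t = Rs T - integral {t..T}
      (\<lambda>s. (LamY s + Q s ** matrix_inv (Rf s)) ** Rs s
        + Rs s ** transpose (LamY s + Q s ** matrix_inv (Rf s)) - Q s)"
    if "t \<in> {0..T}" for t
    using mus_eq[OF that] Rs_eq[OF that] by (simp_all add: reduced)
  show ?thesis
    using smoother_eq_filter_without_gain[OF cLamY cont_Q cfY cmuf cmus cRf cRs Q_sym Rf_inv Rf0_sym
        muf_fwd Rf_fwd mus_bwd Rs_bwd mus_T Rs_T]
    by (simp add: rel_entropy_self)
qed

end
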